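(* Let $Q$ be a convex $k$-gon in $\mathbb{R}^2$ containing the origin in its interior, with edges $e_0,\dots,e_{k-1}$. Let $p,q\in\mathbb{R}^2$ be two distinct points such that the segment $pq$ is not parallel to any edge or diagonal of $Q$. Then an edgelet $g$ with label $\psi(g)=(e_i,e_j)$ appears on the bisector $b_{pq}$ if and only if there is an oriented line parallel to $\vec{pq}$ (and oriented in the direction of $\vec{pq}$) that crosses $\partial Q$ at the relative interiors of $e_i$ and $e_j$, in this order.
   Context: A homothetic placement of $Q$ is a set $Q'=x+\lambda Q$ with $x\in\mathbb{R}^2$ (its center) and $\lambda>0$; edges of $Q'$ are identified with the corresponding edges of $Q$. For $x,y\in\mathbb{R}^2$, $d_Q(x,y)=\min\{\lambda\ge 0: y\in x+\lambda Q\}$. The bisector $b_{pq}$ is the set $\{x: d_Q(x,p)=d_Q(x,q)\}$, equivalently the locus of centers of homothetic placements of $Q$ whose boundary contains both $p$ and $q$. An edgelet of $b_{pq}$ with label $(e_i,e_j)$ is a maximal segment of $b_{pq}$ consisting of centers of placements $Q'$ for which $p$ lies in the relative interior of the edge $e_i$ of $Q'$ and $q$ lies in the relative interior of the edge $e_j$ of $Q'$. *)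

theory Defs
  imports "HOL-Analysis.Analysis"
begin

definition cross2 :: "real^2 \<Rightarrow> real^2 \<Rightarrow> real" where
  "cross2 a b = a$1 * b$2 - a$2 * b$1"

text \<open>A convex k-gon given by its vertices v 0, ..., v (k-1) in counterclockwise order:
  every vertex not on the directed edge from v i to v (i+1 mod k) lies strictly to its left.\<close>
definition convex_kgon :: "(nat \<Rightarrow> real^2) \<Rightarrow> nat \<Rightarrow> bool" where
  "convex_kgon v k \<longleftrightarrow> k \<ge> 3 \<and>
     (\<forall>i<k. \<forall>j<k. j \<noteq> i \<and> j \<noteq> Suc i mod k \<longrightarrow>
        cross2 (v (Suc i mod k) - v i) (v j - v i) > 0)"

definition polygon :: "(nat \<Rightarrow> real^2) \<Rightarrow> nat \<Rightarrow> (real^2) set" where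
  "polygon v k = convex hull (v ` {..<k})"

definition edge :: "(nat \<Rightarrow> real^2) \<Rightarrow> nat \<Rightarrow> nat \<Rightarrow> (real^2) set" where
  "edge v k i = closed_segment (v i) (v (Suc i mod k))"

definition edge_relint :: "(nat \<Rightarrow> real^2) \<Rightarrow> nat \<Rightarrow> nat \<Rightarrow> (real^2) set" where
  "edge_relint v k i = open_segment (v i) (v (Suc i mod k))"

definition placement :: "real^2 \<Rightarrow> real \<Rightarrow> (real^2) set \<Rightarrow> (real^2) set" where
  "placement x l S = (\<lambda>y. x + l *\<^sub>R y) ` S"

definition dQ :: "(real^2) set \<Rightarrow> real^2 \<Rightarrow> real^2 \<Rightarrow> real" where
  "dQ Q x y = Inf {l. l \<ge> 0 \<and> y \<in> placement x l Q}"

definition bisector :: "(real^2) set \<Rightarrow> real^2 \<Rightarrow> real^2 \<Rightarrow> (real^2) set" where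
  "bisector Q p q = {x. dQ Q x p = dQ Q x q}"

definition label_centers ::
  "(nat \<Rightarrow> real^2) \<Rightarrow> nat \<Rightarrow> real^2 \<Rightarrow> real^2 \<Rightarrow> nat \<Rightarrow> nat \<Rightarrow> (real^2) set" where
  "label_centers v k p q i j = {x. \<exists>l>0. p \<in> placement x l (edge_relint v k i) \<and>
                                          q \<in> placement x l (edge_relint v k j)}"

text \<open>A (non-degenerate, possibly open/half-open) segment: a convex subset of a line
  containing at least two points.\<close>
definition is_segment :: "(real^2) set \<Rightarrow> bool" where
  "is_segment S \<longleftrightarrow> convex S \<and> collinear S \<and> (\<exists>a b. a \<in> S \<and> b \<in> S \<and> a \<noteq> b)"

definition edgelet ::
  "(nat \<Rightarrow> real^2) \<Rightarrow> nat \<Rightarrow> real^2 \<Rightarrow> real^2 \<Rightarrow> nat \<Rightarrow> nat \<Rightarrow> (real^2) set \<Rightarrow> bool" where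
  "edgelet v k p q i j g \<longleftrightarrow>
     is_segment g \<and> g \<subseteq> bisector (polygon v k) p q \<and> g \<subseteq> label_centers v k p q i j \<and>
     (\<forall>g'. is_segment g' \<and> g \<subseteq> g' \<and> g' \<subseteq> bisector (polygon v k) p q \<and>
            g' \<subseteq> label_centers v k p q i j \<longrightarrow> g' = g)"

end

theory Submission
  imports Defs
begin

text \<open>A center \<open>x\<close> carries the label \<open>(e\<^sub>i, e\<^sub>j)\<close> exactly when \<open>p = x + \<lambda> u\<close> and
  \<open>q = x + \<lambda> w\<close> with \<open>\<lambda> > 0\<close> and \<open>u\<close>, \<open>w\<close> in the relative interiors of \<open>e\<^sub>i\<close>, \<open>e\<^sub>j\<close>;
  then \<open>q - p = \<lambda> (w - u)\<close>, so the chord \<open>uw\<close> of \<open>Q\<close> is a positive multiple of \<open>pq\<close>.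
  Conversely the set of all such centers is itself an edgelet. It lies in \<open>b\<^sub>p\<^sub>q\<close>, because
  a point \<open>\<lambda> u\<close> with \<open>u\<close> on an edge has \<open>Q\<close>-distance exactly \<open>\<lambda>\<close> (the supporting line of the
  edge misses the origin). It is convex, and it lies on a line, since eliminating \<open>\<lambda>\<close> from the
  supporting-line equations \<open>e\<^sub>i \<times> (p - x) = \<lambda> c\<^sub>i\<close>, \<open>e\<^sub>j \<times> (q - x) = \<lambda> c\<^sub>j\<close> leaves a linear
  equation in \<open>x\<close>. Finally, as \<open>e\<^sub>j\<close> is not parallel to \<open>pq\<close>, the chord can be slid a little
  along the two edges, which yields a second center.\<close>

lemma cross2_add_right [simp]: "cross2 a (x + y) = cross2 a x + cross2 a y"
  and cross2_diff_right [simp]: "cross2 a (x - y) = cross2 a x - cross2 a y"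
  and cross2_scaleR_right [simp]: "cross2 a (c *\<^sub>R x) = c * cross2 a x"
  and cross2_diff_left: "cross2 (x - y) a = cross2 x a - cross2 y a"
  and cross2_scaleR_left: "cross2 (c *\<^sub>R x) a = c * cross2 x a"
  and cross2_anticomm: "cross2 a b = - cross2 b a"
  and cross2_zero_left [simp]: "cross2 0 a = 0"
  by (simp_all add: cross2_def algebra_simps)

lemma cross2_scaleR_identity:
  "cross2 e d *\<^sub>R f - cross2 f d *\<^sub>R e = cross2 e f *\<^sub>R (d::real^2)"
  by (simp add: vec_eq_iff forall_2 cross2_def algebra_simps)

definition perp2 :: "real^2 \<Rightarrow> real^2" where
  "perp2 a = vector [- a$2, a$1]"

lemma cross2_eq_inner_perp2: "cross2 a y = perp2 a \<bullet> y"
  by (simp add: cross2_def perp2_def inner_vec_def sum_2)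

lemma perp2_eq_0_iff [simp]: "perp2 a = 0 \<longleftrightarrow> a = 0"
  by (auto simp: perp2_def vec_eq_iff forall_2)

lemma collinear_cross2_level_set:
  assumes "a \<noteq> 0"
  shows "collinear {x. cross2 a x = K}"
  using assms by (simp add: cross2_eq_inner_perp2 collinear_aff_dim)

lemma cross2_open_segment:
  assumes "u \<in> open_segment a b"
  shows "cross2 (b - a) u = cross2 (b - a) a"
proof -
  from assms obtain t where u: "u = (1 - t) *\<^sub>R a + t *\<^sub>R b"
    by (auto simp: in_segment)
  show ?thesis unfolding u by (simp add: cross2_def algebra_simps)
qed

lemma polygon_left_of_edge:
  assumes "convex_kgon v k" "i < k" "y \<in> polygon v k"
  shows "cross2 (v (Suc i mod k) - v i) (v i) \<le> cross2 (v (Suc i mod k) - v i) y"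
proof -
  let ?n = "perp2 (v (Suc i mod k) - v i)"
  have "v ` {..<k} \<subseteq> {y. ?n \<bullet> v i \<le> ?n \<bullet> y}"
  proof clarify
    fix j assume "j < k"
    with assms(1,2) have "j \<noteq> i \<and> j \<noteq> Suc i mod k \<longrightarrow>
        0 < cross2 (v (Suc i mod k) - v i) (v j - v i)"
      unfolding convex_kgon_def by blast
    then have "0 \<le> cross2 (v (Suc i mod k) - v i) (v j - v i)"
      by (cases "j = i \<or> j = Suc i mod k") (auto simp: cross2_def)
    then show "?n \<bullet> v i \<le> ?n \<bullet> v j"
      by (simp add: cross2_eq_inner_perp2 inner_diff_right)
  qed
  then have "polygon v k \<subseteq> {y. ?n \<bullet> v i \<le> ?n \<bullet> y}"
    unfolding polygon_def by (intro hull_minimal convex_halfspace_ge)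
  with assms(3) show ?thesis by (auto simp: cross2_eq_inner_perp2)
qed

lemma origin_strictly_left_of_edge:
  assumes "convex_kgon v k" "0 \<in> interior (polygon v k)" "i < k" "v (Suc i mod k) \<noteq> v i"
  shows "cross2 (v (Suc i mod k) - v i) (v i) < 0"
proof -
  let ?n = "perp2 (v (Suc i mod k) - v i)"
  have "polygon v k \<subseteq> {y. ?n \<bullet> v i \<le> ?n \<bullet> y}"
    using polygon_left_of_edge[OF assms(1,3)] by (auto simp: cross2_eq_inner_perp2)
  then have "0 \<in> interior {y. ?n \<bullet> v i \<le> ?n \<bullet> y}"
    using assms(2) interior_mono by blast
  with assms(4) show ?thesis by (simp add: cross2_eq_inner_perp2)
qed

lemma edge_relint_subset_polygon:
  assumes "i < k"
  shows "edge_relint v k i \<subseteq> polygon v k"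
proof -
  have "edge_relint v k i \<subseteq> convex hull {v i, v (Suc i mod k)}"
    unfolding edge_relint_def segment_convex_hull[symmetric]
    by (rule segment_open_subset_closed)
  also have "\<dots> \<subseteq> polygon v k"
    unfolding polygon_def using assms by (intro hull_mono) auto
  finally show ?thesis .
qed

lemma dQ_placement_edge_relint:
  assumes "convex_kgon v k" "0 \<in> interior (polygon v k)" "i < k"
    and "l > 0" "z \<in> placement x l (edge_relint v k i)"
  shows "dQ (polygon v k) x z = l"
proof -
  define e where "e = v (Suc i mod k) - v i"
  from assms(5) obtain u where u: "u \<in> edge_relint v k i" and z: "z = x + l *\<^sub>R u"
    unfolding placement_def by auto
  then have "v (Suc i mod k) \<noteq> v i"
    unfolding edge_relint_def by auto
  then have neg: "cross2 e (v i) < 0"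
    unfolding e_def using origin_strictly_left_of_edge assms(1-3) by blast
  have cu: "cross2 e u = cross2 e (v i)"
    using u unfolding e_def edge_relint_def by (rule cross2_open_segment)
  show ?thesis unfolding dQ_def
  proof (rule cInf_eq_minimum)
    show "l \<in> {m. 0 \<le> m \<and> z \<in> placement x m (polygon v k)}"
      using edge_relint_subset_polygon[OF assms(3)] u z assms(4)
      unfolding placement_def by auto
  next
    fix m assume "m \<in> {m. 0 \<le> m \<and> z \<in> placement x m (polygon v k)}"
    then obtain y where m: "0 \<le> m" and y: "y \<in> polygon v k" and "z = x + m *\<^sub>R y"
      unfolding placement_def by auto
    with z have "l *\<^sub>R u = m *\<^sub>R y" by simp
    then have "l * cross2 e (v i) = m * cross2 e y"
      by (metis cu cross2_scaleR_right)
    also have "\<dots> \<ge> m * cross2 e (v i)"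
      using polygon_left_of_edge[OF assms(1,3) y] m unfolding e_def by (rule mult_left_mono)
    finally show "l \<le> m" using neg by simp
  qed
qed

lemma label_centers_subset_bisector:
  assumes "convex_kgon v k" "0 \<in> interior (polygon v k)" "i < k" "j < k"
  shows "label_centers v k p q i j \<subseteq> bisector (polygon v k) p q"
  using assms dQ_placement_edge_relint unfolding label_centers_def bisector_def by fastforce

lemma mem_label_centers_iff:
  "x \<in> label_centers v k p q i j \<longleftrightarrow>
     (\<exists>l>0. \<exists>u \<in> edge_relint v k i. \<exists>w \<in> edge_relint v k j. p = x + l *\<^sub>R u \<and> q = x + l *\<^sub>R w)"
  by (auto simp: label_centers_def placement_def)

lemma scaled_convex_combination:
  fixes z x1 x2 u1 u2 :: "'a::real_vector"
  assumes "z = x1 + l1 *\<^sub>R u1" "z = x2 + l2 *\<^sub>R u2" "L = (1 - t) * l1 + t * l2" "L \<noteq> 0"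
  shows "z = ((1 - t) *\<^sub>R x1 + t *\<^sub>R x2) +
             L *\<^sub>R (((1 - t) * l1 / L) *\<^sub>R u1 + (t * l2 / L) *\<^sub>R u2)"
proof -
  have "L *\<^sub>R (((1 - t) * l1 / L) *\<^sub>R u1 + (t * l2 / L) *\<^sub>R u2) =
        (1 - t) *\<^sub>R (l1 *\<^sub>R u1) + t *\<^sub>R (l2 *\<^sub>R u2)"
    using assms(4) by (simp add: scaleR_add_right)
  also have "\<dots> = (1 - t) *\<^sub>R (z - x1) + t *\<^sub>R (z - x2)"
    using assms(1,2) by (metis add_diff_cancel_left')
  finally show ?thesis by (simp add: algebra_simps)
qed

lemma convex_common_placement_centers:
  assumes "convex S" "convex T"
  shows "convex {x. \<exists>l>0. p \<in> placement x l S \<and> q \<in> placement x l T}"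
  unfolding convex_alt
proof (intro ballI allI impI)
  fix x1 x2 and t :: real
  assume "x1 \<in> {x. \<exists>l>0. p \<in> placement x l S \<and> q \<in> placement x l T}"
    and "x2 \<in> {x. \<exists>l>0. p \<in> placement x l S \<and> q \<in> placement x l T}"
    and t: "0 \<le> t \<and> t \<le> 1"
  then obtain l1 u1 w1 l2 u2 w2 where l: "l1 > 0" "l2 > 0"
    and u: "u1 \<in> S" "u2 \<in> S" and w: "w1 \<in> T" "w2 \<in> T"
    and p: "p = x1 + l1 *\<^sub>R u1" "p = x2 + l2 *\<^sub>R u2"
    and q: "q = x1 + l1 *\<^sub>R w1" "q = x2 + l2 *\<^sub>R w2"
    unfolding placement_def by auto
  define L where "L = (1 - t) * l1 + t * l2"
  have "L > 0"
    unfolding L_def using t l by (cases "t = 1") (auto intro: add_nonneg_pos add_pos_nonneg)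
  define a b where "a = (1 - t) * l1 / L" and "b = t * l2 / L"
  have ab: "0 \<le> a" "0 \<le> b" "a + b = 1"
    using t l \<open>L > 0\<close> by (auto simp: a_def b_def L_def add_divide_distrib[symmetric])
  have "a *\<^sub>R u1 + b *\<^sub>R u2 \<in> S" "a *\<^sub>R w1 + b *\<^sub>R w2 \<in> T"
    using convexD[OF assms(1) u ab] convexD[OF assms(2) w ab] by auto
  with \<open>L > 0\<close> show "(1 - t) *\<^sub>R x1 + t *\<^sub>R x2 \<in>
      {x. \<exists>l>0. p \<in> placement x l S \<and> q \<in> placement x l T}"
    using scaled_convex_combination[OF p L_def] scaled_convex_combination[OF q L_def]
    unfolding placement_def a_def b_def by force
qed

lemma convex_label_centers: "convex (label_centers v k p q i j)"
  unfolding label_centers_def edge_relint_def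
  by (intro convex_common_placement_centers convex_open_segment)

lemma collinear_label_centers:
  assumes "convex_kgon v k" "0 \<in> interior (polygon v k)" "i < k" "j < k"
    and x0: "x0 \<in> label_centers v k p q i j"
    and np: "cross2 (v (Suc j mod k) - v j) (q - p) \<noteq> 0"
  shows "collinear (label_centers v k p q i j)"
proof -
  define e f where "e = v (Suc i mod k) - v i" and "f = v (Suc j mod k) - v j"
  define ci cj where "ci = cross2 e (v i)" and "cj = cross2 f (v j)"
  have support: "cross2 e (p - x) = l * ci \<and> cross2 f (q - x) = l * cj"
    if "l > 0" "u \<in> edge_relint v k i" "w \<in> edge_relint v k j"
      "p = x + l *\<^sub>R u" "q = x + l *\<^sub>R w" for x l u w
    using that cross2_open_segment[of u "v i"] cross2_open_segment[of w "v j"]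
    unfolding e_def f_def ci_def cj_def edge_relint_def by simp
  from x0 obtain l0 u0 w0 where l0: "l0 > 0" and u0: "u0 \<in> edge_relint v k i"
    and w0: "w0 \<in> edge_relint v k j" and p0: "p = x0 + l0 *\<^sub>R u0" and q0: "q = x0 + l0 *\<^sub>R w0"
    unfolding mem_label_centers_iff by blast
  then have "v (Suc i mod k) \<noteq> v i" "v (Suc j mod k) \<noteq> v j"
    unfolding edge_relint_def by auto
  then have "ci < 0" "cj < 0"
    unfolding ci_def cj_def e_def f_def using origin_strictly_left_of_edge assms(1-4) by blast+
  define a where "a = ci *\<^sub>R f - cj *\<^sub>R e"
  have cross2_a: "cross2 a y = ci * cross2 f y - cj * cross2 e y" for y
    unfolding a_def by (simp add: cross2_diff_left cross2_scaleR_left)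
  have "label_centers v k p q i j \<subseteq> {x. cross2 a x = ci * cross2 f q - cj * cross2 e p}"
  proof
    fix x assume "x \<in> label_centers v k p q i j"
    then obtain l where "cross2 e (p - x) = l * ci" "cross2 f (q - x) = l * cj"
      unfolding mem_label_centers_iff using support by blast
    then show "x \<in> {x. cross2 a x = ci * cross2 f q - cj * cross2 e p}"
      by (simp add: cross2_a algebra_simps)
  qed
  moreover have "a \<noteq> 0"
  proof
    assume "a = 0"
    have "cross2 e (q - x0) = l0 * ci + cross2 e (q - p)" "cross2 f (q - x0) = l0 * cj"
      using support[OF l0 u0 w0 p0 q0] by (simp_all add: algebra_simps)
    with \<open>a = 0\<close> have "cj * cross2 e (q - p) = 0"
      using cross2_a[of "q - x0"] by (simp add: algebra_simps)
    with \<open>cj < 0\<close> \<open>a = 0\<close> have "ci * cross2 f (q - p) = 0"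
      using cross2_a[of "q - p"] by simp
    with \<open>ci < 0\<close> np show False unfolding f_def by simp
  qed
  ultimately show ?thesis
    using collinear_cross2_level_set collinear_subset by blast
qed

lemma another_parallel_chord:
  fixes A B C D d u0 w0 :: "real^2"
  assumes u0: "u0 \<in> open_segment A B" and w0: "w0 \<in> open_segment C D"
    and chord: "w0 - u0 = \<tau> *\<^sub>R d" "0 < \<tau>" and np: "cross2 (D - C) d \<noteq> 0"
  obtains u w \<mu> where "u \<in> open_segment A B" "w \<in> open_segment C D"
    "w - u = \<mu> *\<^sub>R d" "0 < \<mu>" "u \<noteq> u0"
proof -
  obtain \<alpha> where "A \<noteq> B" "0 < \<alpha>" "\<alpha> < 1" and u0_eq: "u0 = (1 - \<alpha>) *\<^sub>R A + \<alpha> *\<^sub>R B"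
    using u0 by (auto simp: in_segment)
  obtain \<beta> where "C \<noteq> D" "0 < \<beta>" "\<beta> < 1" and w0_eq: "w0 = (1 - \<beta>) *\<^sub>R C + \<beta> *\<^sub>R D"
    using w0 by (auto simp: in_segment)
  define e f where "e = B - A" and "f = D - C"
  have lim: "((\<lambda>\<epsilon>. c + \<epsilon> * b) \<longlongrightarrow> c) (at_right 0)" for c b :: real
    by (auto intro!: tendsto_eq_intros)
  have "\<forall>\<^sub>F \<epsilon> in at_right 0. 0 < \<epsilon> \<and>
      0 < \<alpha> + \<epsilon> * cross2 f d \<and> \<alpha> + \<epsilon> * cross2 f d < 1 \<and>
      0 < \<beta> + \<epsilon> * cross2 e d \<and> \<beta> + \<epsilon> * cross2 e d < 1 \<and> 0 < \<tau> + \<epsilon> * cross2 e f"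
    using eventually_at_right_less \<open>0 < \<alpha>\<close> \<open>\<alpha> < 1\<close> \<open>0 < \<beta>\<close> \<open>\<beta> < 1\<close> \<open>0 < \<tau>\<close>
    by (intro eventually_conj order_tendstoD[OF lim]) auto
  then obtain \<epsilon> where \<epsilon>: "0 < \<epsilon>"
    and \<alpha>': "0 < \<alpha> + \<epsilon> * cross2 f d" "\<alpha> + \<epsilon> * cross2 f d < 1"
    and \<beta>': "0 < \<beta> + \<epsilon> * cross2 e d" "\<beta> + \<epsilon> * cross2 e d < 1"
    and \<mu>: "0 < \<tau> + \<epsilon> * cross2 e f"
    using eventually_happens' trivial_limit_at_right_real by blast
  \<comment> \<open>Moving \<open>u0\<close> by \<open>\<epsilon> (f \<times> d) e\<close> and \<open>w0\<close> by \<open>\<epsilon> (e \<times> d) f\<close> keeps \<open>w - u\<close> parallel to \<open>d\<close>,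
    by the identity \<open>cross2_scaleR_identity\<close>.\<close>
  let ?u = "u0 + (\<epsilon> * cross2 f d) *\<^sub>R e" and ?w = "w0 + (\<epsilon> * cross2 e d) *\<^sub>R f"
  show thesis
  proof
    show "?u \<in> open_segment A B"
      unfolding in_segment using \<open>A \<noteq> B\<close> \<alpha>'
      by (intro conjI exI[of _ "\<alpha> + \<epsilon> * cross2 f d"]) (auto simp: u0_eq e_def algebra_simps)
    show "?w \<in> open_segment C D"
      unfolding in_segment using \<open>C \<noteq> D\<close> \<beta>'
      by (intro conjI exI[of _ "\<beta> + \<epsilon> * cross2 e d"]) (auto simp: w0_eq f_def algebra_simps)
    have "?w - ?u = (w0 - u0) + \<epsilon> *\<^sub>R (cross2 e d *\<^sub>R f - cross2 f d *\<^sub>R e)"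
      by (simp add: algebra_simps)
    then show "?w - ?u = (\<tau> + \<epsilon> * cross2 e f) *\<^sub>R d"
      by (simp add: chord(1) cross2_scaleR_identity algebra_simps)
    show "0 < \<tau> + \<epsilon> * cross2 e f" by (fact \<mu>)
    show "?u \<noteq> u0"
      using \<epsilon> np \<open>A \<noteq> B\<close> unfolding e_def f_def by simp
  qed
qed

lemma scaleR_eq_off_origin_line:
  fixes e u u' :: "real^2"
  assumes "cross2 e u = c" "cross2 e u' = c" "c \<noteq> 0" "a *\<^sub>R u = b *\<^sub>R u'" "a \<noteq> 0"
  shows "u = u'"
proof -
  have "a * c = b * c"
    using arg_cong[OF assms(4), of "cross2 e"] assms(1,2) by simp
  with assms(3) have "a = b" by simp
  with assms(4,5) show ?thesis by simp
qed

lemma is_segment_label_centers: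
  assumes kg: "convex_kgon v k" and int: "0 \<in> interior (polygon v k)" and "i < k" "j < k"
    and u0: "u0 \<in> edge_relint v k i" and w0: "w0 \<in> edge_relint v k j"
    and chord: "w0 - u0 = \<tau> *\<^sub>R (q - p)" "0 < \<tau>"
    and np: "cross2 (v (Suc j mod k) - v j) (q - p) \<noteq> 0"
  shows "is_segment (label_centers v k p q i j)"
proof -
  have center: "p - (1 / \<mu>) *\<^sub>R u \<in> label_centers v k p q i j"
    if "u \<in> edge_relint v k i" "w \<in> edge_relint v k j" "w - u = \<mu> *\<^sub>R (q - p)" "0 < \<mu>"
    for u w \<mu>
  proof -
    have "q = p - (1 / \<mu>) *\<^sub>R u + (1 / \<mu>) *\<^sub>R w"
      using that(3,4) by (simp add: algebra_simps flip: scaleR_diff_right)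
    with that show ?thesis
      unfolding mem_label_centers_iff by (intro exI[of _ "1 / \<mu>"] bexI) auto
  qed
  obtain u1 w1 \<mu> where u1: "u1 \<in> edge_relint v k i" and w1: "w1 \<in> edge_relint v k j"
    and chord1: "w1 - u1 = \<mu> *\<^sub>R (q - p)" "0 < \<mu>" and "u1 \<noteq> u0"
    using another_parallel_chord[OF _ _ chord np] u0 w0 unfolding edge_relint_def by blast
  have "p - (1 / \<tau>) *\<^sub>R u0 \<noteq> p - (1 / \<mu>) *\<^sub>R u1"
  proof
    assume "p - (1 / \<tau>) *\<^sub>R u0 = p - (1 / \<mu>) *\<^sub>R u1"
    then have scaled: "(1 / \<tau>) *\<^sub>R u0 = (1 / \<mu>) *\<^sub>R u1" by simp
    let ?e = "v (Suc i mod k) - v i"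
    have "v (Suc i mod k) \<noteq> v i"
      using u0 unfolding edge_relint_def by auto
    then have "cross2 ?e (v i) \<noteq> 0"
      using origin_strictly_left_of_edge[OF kg int \<open>i < k\<close>] by simp
    moreover have "cross2 ?e u0 = cross2 ?e (v i)" "cross2 ?e u1 = cross2 ?e (v i)"
      using u0 u1 unfolding edge_relint_def by (simp_all add: cross2_open_segment)
    ultimately have "u0 = u1"
      using scaleR_eq_off_origin_line scaled chord(2) by simp
    with \<open>u1 \<noteq> u0\<close> show False by simp
  qed
  then show ?thesis
    unfolding is_segment_def
    using convex_label_centers collinear_label_centers[OF assms(1-4) _ np]
      center[OF u0 w0 chord] center[OF u1 w1 chord1] by blast
qed

lemma edgelet_label_centers:
  assumes "convex_kgon v k" "0 \<in> interior (polygon v k)" "i < k" "j < k"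
    and "is_segment (label_centers v k p q i j)"
  shows "edgelet v k p q i j (label_centers v k p q i j)"
  using assms label_centers_subset_bisector unfolding edgelet_def by blast

theorem lemma1:
  fixes v :: "nat \<Rightarrow> real^2" and k :: nat and p q :: "real^2" and i j :: nat
  assumes "convex_kgon v k"
    and "0 \<in> interior (polygon v k)"
    and "p \<noteq> q"
    and "\<forall>a<k. \<forall>b<k. a \<noteq> b \<longrightarrow> cross2 (q - p) (v b - v a) \<noteq> 0"
    and "i < k" and "j < k"
  shows "(\<exists>g. edgelet v k p q i j g) \<longleftrightarrow>
         (\<exists>a s t. s < t \<and> a + s *\<^sub>R (q - p) \<in> edge_relint v k i \<and>
                           a + t *\<^sub>R (q - p) \<in> edge_relint v k j)"
proof
  assume "\<exists>g. edgelet v k p q i j g"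
  then obtain x where "x \<in> label_centers v k p q i j"
    unfolding edgelet_def is_segment_def by blast
  then obtain l u w where "l > 0" "u \<in> edge_relint v k i" "w \<in> edge_relint v k j"
    and "q - p = l *\<^sub>R (w - u)"
    unfolding mem_label_centers_iff by (auto simp: algebra_simps)
  then show "\<exists>a s t. s < t \<and> a + s *\<^sub>R (q - p) \<in> edge_relint v k i \<and>
                       a + t *\<^sub>R (q - p) \<in> edge_relint v k j"
    by (intro exI[of _ u] exI[of _ 0] exI[of _ "1 / l"]) auto
next
  assume "\<exists>a s t. s < t \<and> a + s *\<^sub>R (q - p) \<in> edge_relint v k i \<and>
                   a + t *\<^sub>R (q - p) \<in> edge_relint v k j"
  then obtain a s t where "s < t" and u0: "a + s *\<^sub>R (q - p) \<in> edge_relint v k i"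
    and w0: "a + t *\<^sub>R (q - p) \<in> edge_relint v k j" by blast
  have "j \<noteq> Suc j mod k" "Suc j mod k < k"
    using w0 \<open>j < k\<close> unfolding edge_relint_def by auto
  then have np: "cross2 (v (Suc j mod k) - v j) (q - p) \<noteq> 0"
    using assms(4) \<open>j < k\<close> by (metis cross2_anticomm neg_0_equal_iff_equal)
  have chord: "(a + t *\<^sub>R (q - p)) - (a + s *\<^sub>R (q - p)) = (t - s) *\<^sub>R (q - p)"
    by (simp add: scaleR_diff_left)
  have "is_segment (label_centers v k p q i j)"
    using is_segment_label_centers[OF assms(1,2,5,6) u0 w0 chord _ np] \<open>s < t\<close> by simp
  then show "\<exists>g. edgelet v k p q i j g"
    using edgelet_label_centers[OF assms(1,2,5,6)] by blast
qed

end
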